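(* Let $k\in\mathbb{N}$ with $k\ge2$. For every actively connected set $S$, there exists a collection $\mathcal{S}_k$ of subsets of $S$, each containing at most $k$ elements, such that $\mathrm{cost}(\mathcal{S}_k)\le\big(1+\frac{1}{\lfloor\log_2 k\rfloor}\big)\cdot\mathrm{cost}(S)$ and $\mathrm{gain}(\mathcal{S}_k)=\mathrm{gain}(\{S\})$.
   Context: Steiner Forest: finite undirected graph $G=(V,E)$, non-negative edge costs $(c_e)_{e\in E}$, set $\mathcal{D}$ of demand pairs $\{a,b\}\subseteq V$ (partners). For $U\subseteq V$, $\delta(U)$ is the set of edges with exactly one endpoint in $U$. The $\varepsilon$-extended moat-growing algorithm (fixed $\varepsilon\ge0$): time $t$ increases continuously from $0$ at unit rate; it maintains tight edges $F$ (initially empty), duals $y_S(t)\ge0$ (initially $0$), and budgets of components (initially $0$). $\mathcal{C}^t$ is the family of vertex sets of connected components of $(V,F)$. A component is demand-active if it contains a vertex not connected in $(V,F)$ to some partner; budget-active if not demand-active but with positive budget; active if either; $\mathcal{A}^t$ is the set of active components. Each $y_S$, $S\in\mathcal{A}^t$, grows at unit rate; budgets of demand-active components grow at rate $\varepsilon$ and of budget-active ones decrease at rate $1$; an edge $e$ with $\sum_{S:e\in\delta(S)}y_S(t)=c_e$ becomes tight and is added to $F$; merging components add budgets. The deactivation time $\tau_v$ of $v$ is the largest $t$ such that for all $s<t$, $v$ lies in a set of $\mathcal{A}^s$. Vertices $u,v$ are actively connected if for some $t$ they lie in a common set of $\mathcal{C}^t$ and $\tau_u,\tau_v\ge t$;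 this is an equivalence relation and a set is actively connected if contained in one equivalence class. For a collection $\mathcal{S}$ of actively connected sets, $\mathcal{A}^t/\mathcal{S}$ arises from $\mathcal{A}^t$ by merging sets of $\mathcal{A}^t$ into a single set whenever they are intersected by the same $S\in\mathcal{S}$ (transitively), and $\mathrm{gain}(\mathcal{S})=2\int_0^\infty(|\mathcal{A}^t|-|\mathcal{A}^t/\mathcal{S}|)\,dt$. For $S\subseteq V$, $\mathrm{cost}(S)$ is the minimum cost $\sum_{e\in F}c_e$ of an edge set $F\subseteq E$ such that all vertices of $S$ lie in one connected component of $(V,F)$; $\mathrm{cost}(\mathcal{S})=\sum_{S\in\mathcal{S}}\mathrm{cost}(S)$. *)

theory Defs
  imports "HOL-Analysis.Analysis"
begin

text \<open>Graphs: vertex set V (finite), edges are 2-element subsets of V,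
  edge costs c, demand pairs D (sets {a,b} of vertices).
  An edge set F defines an adjacency relation; components of (V,F).\<close>

definition edge_rel :: "'v set set \<Rightarrow> ('v \<times> 'v) set" where
  "edge_rel F = {(u, v). {u, v} \<in> F}"

definition comps :: "'v set \<Rightarrow> 'v set set \<Rightarrow> 'v set set" where
  "comps V F = V // {(u, v). u \<in> V \<and> v \<in> V \<and> (u, v) \<in> (edge_rel F)\<^sup>*}"

definition delta :: "'v set set \<Rightarrow> 'v set \<Rightarrow> 'v set set" where
  "delta E U = {e \<in> E. card (e \<inter> U) = 1}"

definition demand_active :: "'v set set \<Rightarrow> 'v set \<Rightarrow> bool" where
  "demand_active D C \<longleftrightarrow> (\<exists>v\<in>C. \<exists>u. {v, u} \<in> D \<and> u \<notin> C)"

text \<open>Run data: Fs t = tight edges at time t, Act t = active components at time t.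
  Dual variable y_S(t): grows at unit rate while S is active.\<close>
definition dual :: "(real \<Rightarrow> 'v set set) \<Rightarrow> 'v set \<Rightarrow> real \<Rightarrow> real" where
  "dual Act S t = integral {0..t} (\<lambda>s. if S \<in> Act s then 1 else 0)"

definition load :: "'v set \<Rightarrow> 'v set set \<Rightarrow> (real \<Rightarrow> 'v set set) \<Rightarrow> 'v set \<Rightarrow> real \<Rightarrow> real" where
  "load V E Act e t = (\<Sum>S\<in>{S. S \<subseteq> V \<and> e \<in> delta E S}. dual Act S t)"

text \<open>Budget of a component C at time t: budgets of demand-active components grow at rate eps,
  those of budget-active components decrease at rate 1, and merging adds budgets; hence the
  budget of C is the accumulated change over all (earlier) components contained in C.\<close>
definition budget :: "'v set set \<Rightarrow> real \<Rightarrow> (real \<Rightarrow> 'v set set) \<Rightarrow> 'v set \<Rightarrow> real \<Rightarrow> real" where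
  "budget D eps Act C t = integral {0..t}
     (\<lambda>s. eps * real (card {S \<in> Act s. S \<subseteq> C \<and> demand_active D S})
          - real (card {S \<in> Act s. S \<subseteq> C \<and> \<not> demand_active D S}))"

definition moat_run :: "'v set \<Rightarrow> 'v set set \<Rightarrow> ('v set \<Rightarrow> real) \<Rightarrow> 'v set set \<Rightarrow> real
     \<Rightarrow> (real \<Rightarrow> 'v set set) \<Rightarrow> (real \<Rightarrow> 'v set set) \<Rightarrow> bool" where
  "moat_run V E c D eps Fs Act \<longleftrightarrow>
     (\<forall>S t. (\<lambda>s. if S \<in> Act s then 1 else (0::real)) integrable_on {0..t}) \<and>
     (\<forall>t\<ge>0. Fs t = {e \<in> E. load V E Act e t \<ge> c e}) \<and>
     (\<forall>t\<ge>0. Act t = {C \<in> comps V (Fs t). demand_active D C \<or>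
                                         (\<not> demand_active D C \<and> budget D eps Act C t > 0)})"

definition deact_time :: "(real \<Rightarrow> 'v set set) \<Rightarrow> 'v \<Rightarrow> ereal" where
  "deact_time Act v = (SUP t \<in> {t. 0 \<le> t \<and> (\<forall>s. 0 \<le> s \<and> s < t \<longrightarrow> (\<exists>A\<in>Act s. v \<in> A))}. ereal t)"

definition act_conn :: "'v set \<Rightarrow> (real \<Rightarrow> 'v set set) \<Rightarrow> (real \<Rightarrow> 'v set set) \<Rightarrow> 'v \<Rightarrow> 'v \<Rightarrow> bool" where
  "act_conn V Fs Act u v \<longleftrightarrow>
     (\<exists>t\<ge>0. (\<exists>C\<in>comps V (Fs t). u \<in> C \<and> v \<in> C) \<and>
            ereal t \<le> deact_time Act u \<and> ereal t \<le> deact_time Act v)"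

definition act_conn_set :: "'v set \<Rightarrow> (real \<Rightarrow> 'v set set) \<Rightarrow> (real \<Rightarrow> 'v set set) \<Rightarrow> 'v set \<Rightarrow> bool" where
  "act_conn_set V Fs Act S \<longleftrightarrow> (\<forall>u\<in>S. \<forall>v\<in>S. act_conn V Fs Act u v)"

definition merge_rel :: "'v set set \<Rightarrow> 'v set set \<Rightarrow> ('v set \<times> 'v set) set" where
  "merge_rel A SS = {(X, Y). X \<in> A \<and> Y \<in> A \<and> (\<exists>S\<in>SS. S \<inter> X \<noteq> {} \<and> S \<inter> Y \<noteq> {})}"

definition quot_fam :: "'v set set \<Rightarrow> 'v set set \<Rightarrow> 'v set set" where
  "quot_fam A SS = (\<lambda>K. \<Union>K) ` (A // {(X, Y). X \<in> A \<and> Y \<in> A \<and> (X, Y) \<in> (merge_rel A SS)\<^sup>*})"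

definition gain :: "(real \<Rightarrow> 'v set set) \<Rightarrow> 'v set set \<Rightarrow> real" where
  "gain Act SS = 2 * integral {0..} (\<lambda>t. real (card (Act t)) - real (card (quot_fam (Act t) SS)))"

definition cost_set :: "'v set set \<Rightarrow> ('v set \<Rightarrow> real) \<Rightarrow> 'v set \<Rightarrow> real" where
  "cost_set E c S = Min {sum c F | F. F \<subseteq> E \<and> (\<forall>u\<in>S. \<forall>v\<in>S. (u, v) \<in> (edge_rel F)\<^sup>*)}"

definition cost_coll :: "'v set set \<Rightarrow> ('v set \<Rightarrow> real) \<Rightarrow> 'v set set \<Rightarrow> real" where
  "cost_coll E c SS = (\<Sum>S\<in>SS. cost_set E c S)"

end

theory Submission
  imports Defs
begin

text \<open>A cheapest edge set connecting \<open>S\<close> is reshaped into a binary tree with leaf set \<open>S\<close>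
  whose cost, counting edges with multiplicity, is still at most \<open>cost(S)\<close>. Let
  \<open>r = \<lfloor>log 2 k\<rfloor>\<close>. Cutting the tree at the levels \<open>d, d + r, d + 2r, \<dots>\<close> gives pieces with
  at most \<open>2 ^ r \<le> k\<close> leaves; every cut node is paid for by one extra path from it down to a
  leaf of its right subtree. These paths, over all nodes, are disjoint, so for the best of the
  \<open>r\<close> offsets \<open>d\<close> the extra cost is at most \<open>cost(S) / r\<close>.

  The pieces chain \<open>S\<close> together through shared leaves. As \<open>S\<close> is actively connected, at any
  time either all of \<open>S\<close> lies in active components, which the pieces then merge exactly as \<open>S\<close>
  does, or \<open>S\<close> meets at most one active component; so the gain does not change.\<close>

section \<open>Connectivity in edge sets\<close>

definition connects :: "'v set set \<Rightarrow> 'v set \<Rightarrow> bool" where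
  "connects F P \<longleftrightarrow> (\<forall>u\<in>P. \<forall>v\<in>P. (u, v) \<in> (edge_rel F)\<^sup>*)"

lemma edge_rel_mono: "F \<subseteq> G \<Longrightarrow> edge_rel F \<subseteq> edge_rel G"
  by (auto simp: edge_rel_def)

lemma rtrancl_edge_rel_mono: "F \<subseteq> G \<Longrightarrow> (u, v) \<in> (edge_rel F)\<^sup>* \<Longrightarrow> (u, v) \<in> (edge_rel G)\<^sup>*"
  using rtrancl_mono[OF edge_rel_mono] by blast

lemma rtrancl_edge_rel_UnI1: "(u, v) \<in> (edge_rel F)\<^sup>* \<Longrightarrow> (u, v) \<in> (edge_rel (F \<union> G))\<^sup>*"
  by (rule rtrancl_edge_rel_mono[rotated]) auto

lemma rtrancl_edge_rel_UnI2: "(u, v) \<in> (edge_rel G)\<^sup>* \<Longrightarrow> (u, v) \<in> (edge_rel (F \<union> G))\<^sup>*"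
  by (rule rtrancl_edge_rel_mono[rotated]) auto

lemma sym_edge_rel: "sym (edge_rel F)"
  by (auto simp: sym_def edge_rel_def insert_commute)

lemma rtrancl_edge_rel_sym: "(u, v) \<in> (edge_rel F)\<^sup>* \<Longrightarrow> (v, u) \<in> (edge_rel F)\<^sup>*"
  by (rule symD[OF sym_rtrancl[OF sym_edge_rel]])

lemma rtrancl_edge_rel_edge: "{u, v} \<in> F \<Longrightarrow> (u, v) \<in> (edge_rel F)\<^sup>*"
  by (auto simp: edge_rel_def)

lemma connects_if_reachable:
  assumes "\<forall>v\<in>P. (a, v) \<in> (edge_rel F)\<^sup>*"
  shows "connects F P"
  unfolding connects_def using assms by (meson rtrancl_edge_rel_sym rtrancl_trans)

lemma connects_mono: "connects F P \<Longrightarrow> F \<subseteq> G \<Longrightarrow> connects G P"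
  unfolding connects_def using rtrancl_edge_rel_mono[of F G] by blast

lemma rtrancl_edge_rel_Diff_edge:
  assumes "(r, s) \<in> (edge_rel F)\<^sup>*"
  shows "(r, s) \<in> (edge_rel (F - {{r, x}}))\<^sup>* \<or> (x, s) \<in> (edge_rel (F - {{r, x}}))\<^sup>*"
  using assms
proof (induction rule: rtrancl_induct)
  case (step y z)
  show ?case
  proof (cases "{y, z} = {r, x}")
    case True
    then have "z = r \<or> z = x" by (metis doubleton_eq_iff)
    then show ?thesis by auto
  next
    case False
    then have "(y, z) \<in> edge_rel (F - {{r, x}})" using step(2) by (simp add: edge_rel_def)
    with step.IH show ?thesis by (meson rtrancl_into_rtrancl)
  qed
qed simp

definition component_edges :: "'v set set \<Rightarrow> 'v \<Rightarrow> 'v set set" where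
  "component_edges G a = {f \<in> G. f \<noteq> {} \<and> (\<forall>u\<in>f. (a, u) \<in> (edge_rel G)\<^sup>*)}"

lemma component_edges_subset: "component_edges G a \<subseteq> G"
  by (auto simp: component_edges_def)

lemma rtrancl_edge_rel_component_edges:
  assumes "(a, v) \<in> (edge_rel G)\<^sup>*"
  shows "(a, v) \<in> (edge_rel (component_edges G a))\<^sup>*"
  using assms
proof (induction rule: rtrancl_induct)
  case (step y z)
  then have "{y, z} \<in> G" by (simp add: edge_rel_def)
  moreover have "(a, z) \<in> (edge_rel G)\<^sup>*" using step(1,2) by (rule rtrancl_into_rtrancl)
  ultimately have "{y, z} \<in> component_edges G a" using step(1) by (simp add: component_edges_def)
  then have "(y, z) \<in> edge_rel (component_edges G a)" by (simp add: edge_rel_def)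
  with step.IH show ?case by (rule rtrancl_into_rtrancl)
qed simp

lemma component_edges_disjoint:
  assumes "(a, b) \<notin> (edge_rel G)\<^sup>*"
  shows "component_edges G a \<inter> component_edges G b = {}"
proof (rule equals0I)
  fix f assume "f \<in> component_edges G a \<inter> component_edges G b"
  then obtain u where "(a, u) \<in> (edge_rel G)\<^sup>*" "(b, u) \<in> (edge_rel G)\<^sup>*"
    unfolding component_edges_def by blast
  then have "(a, b) \<in> (edge_rel G)\<^sup>*" by (meson rtrancl_edge_rel_sym rtrancl_trans)
  with assms show False by contradiction
qed

lemma edge_rel_split_at_edge:
  obtains Fr Fx where "Fr \<union> Fx \<subseteq> F - {{r, x}}" "Fr \<inter> Fx = {}"
    and "\<And>s. (r, s) \<in> (edge_rel F)\<^sup>* \<Longrightarrow> (r, s) \<in> (edge_rel Fr)\<^sup>* \<or> (x, s) \<in> (edge_rel Fx)\<^sup>*"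
proof
  define F' where "F' = F - {{r, x}}"
  show "component_edges F' r \<union> (F' - component_edges F' r) \<subseteq> F - {{r, x}}"
    using component_edges_subset[of F' r] unfolding F'_def by blast
  show "component_edges F' r \<inter> (F' - component_edges F' r) = {}" by blast
  fix s assume rs: "(r, s) \<in> (edge_rel F)\<^sup>*"
  show "(r, s) \<in> (edge_rel (component_edges F' r))\<^sup>* \<or>
        (x, s) \<in> (edge_rel (F' - component_edges F' r))\<^sup>*"
  proof (cases "(r, s) \<in> (edge_rel F')\<^sup>*")
    case True
    then show ?thesis by (intro disjI1 rtrancl_edge_rel_component_edges)
  next
    case False
    then have xs: "(x, s) \<in> (edge_rel F')\<^sup>*"
      using rtrancl_edge_rel_Diff_edge[OF rs] F'_def by blast
    with False have "(r, x) \<notin> (edge_rel F')\<^sup>*" by (meson rtrancl_trans)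
    then have "component_edges F' x \<subseteq> F' - component_edges F' r"
      using component_edges_disjoint[of r x F'] component_edges_subset[of F' x] by blast
    then have "(x, s) \<in> (edge_rel (F' - component_edges F' r))\<^sup>*"
      by (rule rtrancl_edge_rel_mono) (rule rtrancl_edge_rel_component_edges[OF xs])
    then show ?thesis ..
  qed
qed

section \<open>Minimum connection cost\<close>

lemma finite_connection_costs:
  "finite E \<Longrightarrow> finite {sum c F | F. F \<subseteq> E \<and> (\<forall>u\<in>P. \<forall>v\<in>P. (u, v) \<in> (edge_rel F)\<^sup>*)}"
  by (rule finite_subset[of _ "sum c ` Pow E"]) auto

lemma cost_set_le:
  assumes "finite E" "F \<subseteq> E" "connects F P"
  shows "cost_set E c P \<le> sum c F"
  unfolding cost_set_def
  by (rule Min_le[OF finite_connection_costs[OF assms(1)]]) (use assms(2,3) in \<open>auto simp: connects_def\<close>)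

lemma cost_set_attained:
  assumes "finite E" "connects E P"
  obtains F where "F \<subseteq> E" "connects F P" "sum c F = cost_set E c P"
proof -
  have "cost_set E c P \<in> {sum c F | F. F \<subseteq> E \<and> (\<forall>u\<in>P. \<forall>v\<in>P. (u, v) \<in> (edge_rel F)\<^sup>*)}"
    unfolding cost_set_def using assms
    by (intro Min_in finite_connection_costs) (auto simp: connects_def)
  then show ?thesis using that unfolding connects_def by auto
qed

lemma cost_set_nonneg:
  assumes "finite E" "\<forall>e\<in>E. 0 \<le> c e" "connects E P"
  shows "0 \<le> cost_set E c P"
proof -
  obtain F where "F \<subseteq> E" "sum c F = cost_set E c P"
    using cost_set_attained[OF assms(1,3)] by metis
  with assms(2) show ?thesis by (metis subsetD sum_nonneg)
qed

lemma sum_Un_le_nonneg: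
  fixes c :: "'a \<Rightarrow> 'b::ordered_ab_group_add"
  assumes "\<And>x. 0 \<le> c x"
  shows "sum c (X \<union> Y) \<le> sum c X + sum c Y"
proof (cases "finite X \<and> finite Y")
  case True
  then show ?thesis using sum_Un[of X Y c] sum_nonneg[of "X \<inter> Y" c] assms by simp
next
  case False
  then show ?thesis using assms by (auto intro: add_nonneg_nonneg sum_nonneg)
qed

lemma sum_set_le_sum_list:
  fixes f :: "'a \<Rightarrow> 'b::ordered_comm_monoid_add"
  assumes "\<forall>x\<in>set xs. 0 \<le> f x"
  shows "sum f (set xs) \<le> (\<Sum>x\<leftarrow>xs. f x)"
  using assms by (induction xs) (auto simp: sum.insert_if add_increasing intro: add_mono)

lemma cost_coll_le_sum_list:
  fixes c :: "'v set \<Rightarrow> real"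
  assumes "finite E" "\<forall>e\<in>E. 0 \<le> c e" "\<forall>p\<in>set L. snd p \<subseteq> E \<and> connects (snd p) (fst p)"
  shows "cost_coll E c (fst ` set L) \<le> (\<Sum>p\<leftarrow>L. sum c (snd p))"
proof -
  have "0 \<le> cost_set E c (fst p)" if "p \<in> set L" for p
  proof -
    have "connects E (fst p)" using assms(3) that connects_mono[of "snd p" "fst p" E] by blast
    with assms(1,2) show ?thesis by (rule cost_set_nonneg)
  qed
  then have "sum (cost_set E c) (set (map fst L)) \<le> (\<Sum>P\<leftarrow>map fst L. cost_set E c P)"
    by (intro sum_set_le_sum_list) auto
  also have "\<dots> = (\<Sum>p\<leftarrow>L. cost_set E c (fst p))" by (simp add: o_def)
  also have "\<dots> \<le> (\<Sum>p\<leftarrow>L. sum c (snd p))"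
  proof (rule sum_list_mono)
    fix p assume "p \<in> set L"
    with assms(3) show "cost_set E c (fst p) \<le> sum c (snd p)"
      using cost_set_le[OF assms(1), of "snd p" "fst p" c] by blast
  qed
  finally show ?thesis by (simp add: cost_coll_def)
qed

section \<open>Steiner trees in binary form\<close>

text \<open>\<open>Node v A l B r\<close> is a branching at vertex \<open>v\<close>; the edge sets \<open>A\<close> and \<open>B\<close> connect \<open>v\<close>
  to the roots of \<open>l\<close> and \<open>r\<close>. Edges may be shared between parts of the tree, and
  \<open>stree_cost\<close> counts them with multiplicity.\<close>

datatype 'v stree = Leaf 'v | Node 'v "'v set set" "'v stree" "'v set set" "'v stree"

fun stree_root :: "'v stree \<Rightarrow> 'v" where
  "stree_root (Leaf v) = v"
| "stree_root (Node v A l B r) = v"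

fun stree_leaves :: "'v stree \<Rightarrow> 'v set" where
  "stree_leaves (Leaf v) = {v}"
| "stree_leaves (Node v A l B r) = stree_leaves l \<union> stree_leaves r"

fun stree_edges :: "'v stree \<Rightarrow> 'v set set" where
  "stree_edges (Leaf v) = {}"
| "stree_edges (Node v A l B r) = A \<union> B \<union> stree_edges l \<union> stree_edges r"

fun stree_cost :: "('v set \<Rightarrow> real) \<Rightarrow> 'v stree \<Rightarrow> real" where
  "stree_cost c (Leaf v) = 0"
| "stree_cost c (Node v A l B r) = sum c A + sum c B + stree_cost c l + stree_cost c r"

fun wf_stree :: "'v stree \<Rightarrow> bool" where
  "wf_stree (Leaf v) \<longleftrightarrow> True"
| "wf_stree (Node v A l B r) \<longleftrightarrow>
     (v, stree_root l) \<in> (edge_rel A)\<^sup>* \<and> (v, stree_root r) \<in> (edge_rel B)\<^sup>* \<and> wf_stree l \<and> wf_stree r"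

fun leftmost_leaf :: "'v stree \<Rightarrow> 'v" where
  "leftmost_leaf (Leaf v) = v"
| "leftmost_leaf (Node v A l B r) = leftmost_leaf l"

fun left_path :: "'v stree \<Rightarrow> 'v set set" where
  "left_path (Leaf v) = {}"
| "left_path (Node v A l B r) = A \<union> left_path l"

lemma leftmost_leaf_in_leaves: "leftmost_leaf T \<in> stree_leaves T"
  by (induction T) auto

lemma left_path_subset_edges: "left_path T \<subseteq> stree_edges T"
  by (induction T) auto

lemma rtrancl_left_path:
  "wf_stree T \<Longrightarrow> (stree_root T, leftmost_leaf T) \<in> (edge_rel (left_path T))\<^sup>*"
proof (induction T)
  case (Node v A l B r)
  then have "(v, stree_root l) \<in> (edge_rel (A \<union> left_path l))\<^sup>*"
    and "(stree_root l, leftmost_leaf l) \<in> (edge_rel (A \<union> left_path l))\<^sup>*"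
    by (simp_all add: rtrancl_edge_rel_UnI1 rtrancl_edge_rel_UnI2)
  then show ?case by (simp add: rtrancl_trans)
qed simp

definition stree_in ::
    "'v set set \<Rightarrow> ('v set \<Rightarrow> real) \<Rightarrow> 'v \<Rightarrow> 'v set set \<Rightarrow> 'v stree \<Rightarrow> 'v set \<Rightarrow> bool" where
  "stree_in F c r A T S \<longleftrightarrow> wf_stree T \<and> stree_leaves T = S \<and> (r, stree_root T) \<in> (edge_rel A)\<^sup>* \<and>
     A \<union> stree_edges T \<subseteq> F \<and> sum c A + stree_cost c T \<le> sum c F"

lemma stree_in_Leaf: "(\<And>e. 0 \<le> c e) \<Longrightarrow> stree_in F c r {} (Leaf r) {r}"
  by (simp add: stree_in_def sum_nonneg)

lemma stree_in_mono:
  assumes "stree_in G c r A T S" "G \<subseteq> F" "finite F" "\<And>e. 0 \<le> c e"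
  shows "stree_in F c r A T S"
proof -
  have "sum c G \<le> sum c F" using assms(2-4) by (intro sum_mono2) auto
  with assms(1,2) show ?thesis by (auto simp: stree_in_def)
qed

lemma stree_in_extend:
  assumes "stree_in G c x A T S" "{r, x} \<notin> G" "finite G" "\<And>e. 0 \<le> c e"
  shows "stree_in (insert {r, x} G) c r (insert {r, x} A) T S"
proof -
  have "(r, x) \<in> (edge_rel (insert {r, x} A))\<^sup>*" by (simp add: rtrancl_edge_rel_edge)
  moreover have "(x, stree_root T) \<in> (edge_rel (insert {r, x} A))\<^sup>*"
    using assms(1) rtrancl_edge_rel_mono[of A "insert {r, x} A"] by (auto simp: stree_in_def)
  moreover have "sum c (insert {r, x} A) \<le> c {r, x} + sum c A"
    using sum_Un_le_nonneg[of c "{{r, x}}" A] assms(4) by simp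
  ultimately show ?thesis using assms(1-3) by (auto simp: stree_in_def intro: rtrancl_trans)
qed

lemma stree_in_Node:
  assumes "stree_in F1 c r A1 T1 S1" "stree_in F2 c r A2 T2 S2" "F1 \<inter> F2 = {}" "finite F1" "finite F2"
  shows "stree_in (F1 \<union> F2) c r {} (Node r A1 T1 A2 T2) (S1 \<union> S2)"
  using assms by (auto simp: stree_in_def sum.union_disjoint)

lemma stree_in_combine:
  assumes "finite F" "\<And>e. 0 \<le> c e" "{r, x} \<in> F" "Fr \<union> Fx \<subseteq> F - {{r, x}}" "Fr \<inter> Fx = {}"
    and S: "S = S1 \<union> S2" "S \<noteq> {}"
    and tree1: "S1 \<noteq> {} \<Longrightarrow> \<exists>A T. stree_in Fr c r A T S1"
    and tree2: "S2 \<noteq> {} \<Longrightarrow> \<exists>A T. stree_in Fx c x A T S2"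
  shows "\<exists>A T. stree_in F c r A T S"
proof -
  have fin: "finite Fr" "finite Fx" using assms(1,4) finite_subset by auto
  have tree2': "\<exists>A T. stree_in (insert {r, x} Fx) c r A T S2" if S2_ne: "S2 \<noteq> {}"
  proof -
    obtain A T where T: "stree_in Fx c x A T S2" using tree2[OF S2_ne] by blast
    have "{r, x} \<notin> Fx" using assms(4) by blast
    from stree_in_extend[OF T this fin(2) assms(2)] show ?thesis by blast
  qed
  have F: "Fr \<subseteq> F" "insert {r, x} Fx \<subseteq> F" "Fr \<union> insert {r, x} Fx \<subseteq> F"
    using assms(3,4) by auto
  consider "S2 = {}" | "S1 = {}" | "S1 \<noteq> {}" "S2 \<noteq> {}" by blast
  then show ?thesis
  proof cases
    case 1
    then have "S1 = S" "S1 \<noteq> {}" using S by auto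
    then obtain A T where "stree_in Fr c r A T S" using tree1 by auto
    from stree_in_mono[OF this F(1) assms(1,2)] show ?thesis by blast
  next
    case 2
    then have "S2 = S" "S2 \<noteq> {}" using S by auto
    then obtain A T where "stree_in (insert {r, x} Fx) c r A T S" using tree2' by auto
    from stree_in_mono[OF this F(2) assms(1,2)] show ?thesis by blast
  next
    case 3
    then obtain A1 T1 A2 T2 where "stree_in Fr c r A1 T1 S1" "stree_in (insert {r, x} Fx) c r A2 T2 S2"
      using tree1 tree2' by blast
    moreover have "Fr \<inter> insert {r, x} Fx = {}" using assms(4,5) by blast
    moreover note fin(1)
    moreover have "finite (insert {r, x} Fx)" using fin(2) by simp
    ultimately have "stree_in (Fr \<union> insert {r, x} Fx) c r {} (Node r A1 T1 A2 T2) (S1 \<union> S2)"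
      by (rule stree_in_Node)
    from stree_in_mono[OF this F(3) assms(1,2)] show ?thesis using S by blast
  qed
qed

text \<open>Induction on the number of edges: an edge \<open>{r, x}\<close> at the root is removed and the two
  sides of \<open>edge_rel_split_at_edge\<close> are handled recursively.\<close>

lemma stree_exists_rooted:
  fixes c :: "'v set \<Rightarrow> real"
  assumes "finite F" "\<And>e. 0 \<le> c e" "S \<noteq> {}" "\<forall>s\<in>S. (r, s) \<in> (edge_rel F)\<^sup>*"
  shows "\<exists>A T. stree_in F c r A T S"
  using assms(1,3,4)
proof (induction "card F" arbitrary: F S r rule: less_induct)
  case less
  show ?case
  proof (cases "S = {r}")
    case True
    then show ?thesis using stree_in_Leaf[of c F r, OF assms(2)] by blast
  next
    case False
    then obtain s where "s \<in> S" "s \<noteq> r" using less.prems(2) by blast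
    then have "(r, s) \<in> (edge_rel F)\<^sup>*" "r \<noteq> s" using less.prems(3) by auto
    then have "(r, s) \<in> (edge_rel F)\<^sup>+" by (simp add: rtrancl_eq_or_trancl)
    then obtain x where "(r, x) \<in> edge_rel F" by (meson tranclD)
    then have e: "{r, x} \<in> F" by (simp add: edge_rel_def)
    obtain Fr Fx where split: "Fr \<union> Fx \<subseteq> F - {{r, x}}" "Fr \<inter> Fx = {}"
      and reach: "\<And>s. (r, s) \<in> (edge_rel F)\<^sup>* \<Longrightarrow> (r, s) \<in> (edge_rel Fr)\<^sup>* \<or> (x, s) \<in> (edge_rel Fx)\<^sup>*"
      by (rule edge_rel_split_at_edge[of F r x]) (rule that)
    have "card (F - {{r, x}}) < card F" using less.prems(1) e by (rule card_Diff1_less)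
    then have card: "card Fr < card F" "card Fx < card F"
      using split less.prems(1) card_mono[of "F - {{r, x}}"] by (auto intro: le_less_trans)
    have fin: "finite Fr" "finite Fx" using split less.prems(1) finite_subset by auto
    define S1 where "S1 = {s \<in> S. (r, s) \<in> (edge_rel Fr)\<^sup>*}"
    define S2 where "S2 = S - S1"
    have S1: "\<forall>s\<in>S1. (r, s) \<in> (edge_rel Fr)\<^sup>*" and S2: "\<forall>s\<in>S2. (x, s) \<in> (edge_rel Fx)\<^sup>*"
      using reach less.prems(3) by (auto simp: S1_def S2_def)
    have "S = S1 \<union> S2" by (auto simp: S1_def S2_def)
    from stree_in_combine[of F c, OF less.prems(1) assms(2) e split this less.prems(2)]
    show ?thesis using less.hyps[OF card(1) fin(1) _ S1] less.hyps[OF card(2) fin(2) _ S2] by blast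
  qed
qed

lemma stree_exists:
  fixes c :: "'v set \<Rightarrow> real"
  assumes "finite F" "\<And>e. 0 \<le> c e" "S \<noteq> {}" "connects F S"
  obtains T where "wf_stree T" "stree_leaves T = S" "stree_edges T \<subseteq> F" "stree_cost c T \<le> sum c F"
proof -
  obtain r where "r \<in> S" using assms(3) by blast
  then have "\<forall>s\<in>S. (r, s) \<in> (edge_rel F)\<^sup>*" using assms(4) by (simp add: connects_def)
  from stree_exists_rooted[of F c S r, OF assms(1,2,3) this]
  obtain A T where T: "stree_in F c r A T S" by blast
  have "0 \<le> sum c A" using assms(2) by (simp add: sum_nonneg)
  with T show ?thesis using that by (auto simp: stree_in_def)
qed

section \<open>Cutting a Steiner tree into small pieces\<close>

definition comember_rel :: "'a set set \<Rightarrow> ('a \<times> 'a) set" where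
  "comember_rel SS = {(u, v). \<exists>P\<in>SS. u \<in> P \<and> v \<in> P}"

lemma sym_comember_rel: "sym (comember_rel SS)"
  by (rule symI) (auto simp: comember_rel_def)

lemma comember_rel_mono:
  assumes "\<forall>P\<in>SS. \<exists>Q\<in>SS'. P \<subseteq> Q"
  shows "comember_rel SS \<subseteq> comember_rel SS'"
proof
  fix p assume "p \<in> comember_rel SS"
  then obtain u v P where uv: "p = (u, v)" "P \<in> SS" "u \<in> P" "v \<in> P"
    by (auto simp: comember_rel_def)
  moreover obtain Q where "Q \<in> SS'" "P \<subseteq> Q" using assms uv(2) by blast
  ultimately show "p \<in> comember_rel SS'" by (auto simp: comember_rel_def)
qed

lemma Times_subset_rtrancl_Un:
  assumes "sym R" "X \<times> X \<subseteq> R\<^sup>*" "Y \<times> Y \<subseteq> R\<^sup>*" "x \<in> X" "y \<in> Y" "(x, y) \<in> R\<^sup>*"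
  shows "(X \<union> Y) \<times> (X \<union> Y) \<subseteq> R\<^sup>*"
proof -
  have from_x: "(x, u) \<in> R\<^sup>*" if "u \<in> X \<union> Y" for u
  proof (cases "u \<in> X")
    case True
    then show ?thesis using assms(2,4) by blast
  next
    case False
    then have "(y, u) \<in> R\<^sup>*" using that assms(3,5) by blast
    with assms(6) show ?thesis by (rule rtrancl_trans)
  qed
  have "(u, v) \<in> R\<^sup>*" if "u \<in> X \<union> Y" "v \<in> X \<union> Y" for u v
  proof -
    have "(u, x) \<in> R\<^sup>*" using from_x[OF that(1)] by (rule symD[OF sym_rtrancl[OF assms(1)]])
    then show ?thesis using from_x[OF that(2)] by (rule rtrancl_trans)
  qed
  then show ?thesis by blast
qed

text \<open>A piece is a pair of a set of leaves and a set of edges connecting them.\<close>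

definition join_pieces ::
    "'v set set \<Rightarrow> 'v set set \<Rightarrow> 'v set \<times> 'v set set \<Rightarrow> 'v set \<times> 'v set set \<Rightarrow> 'v set \<times> 'v set set" where
  "join_pieces A B p q = (fst p \<union> fst q, A \<union> B \<union> snd p \<union> snd q)"

text \<open>The tree is cut at the nodes of depth \<open>d, d + (m + 1), d + 2 (m + 1), \<dots>\<close>. At a cut node
  \<open>Node v A l B r\<close> the piece from above is closed off by the detour \<open>B \<union> left_path r\<close> down to
  the leaf \<open>leftmost_leaf r\<close>, and a new piece spanning the next \<open>m + 1\<close> levels starts at \<open>v\<close>.
  \<open>top_piece m d T\<close> is the piece containing the root.\<close>

fun top_piece :: "nat \<Rightarrow> nat \<Rightarrow> 'v stree \<Rightarrow> 'v set \<times> 'v set set" where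
  "top_piece m d (Leaf v) = ({v}, {})"
| "top_piece m 0 (Node v A l B r) = ({leftmost_leaf r}, B \<union> left_path r)"
| "top_piece m (Suc d) (Node v A l B r) = join_pieces A B (top_piece m d l) (top_piece m d r)"

fun lower_pieces :: "nat \<Rightarrow> nat \<Rightarrow> 'v stree \<Rightarrow> ('v set \<times> 'v set set) list" where
  "lower_pieces m d (Leaf v) = []"
| "lower_pieces m 0 (Node v A l B r) =
     join_pieces A B (top_piece m m l) (top_piece m m r) # lower_pieces m m l @ lower_pieces m m r"
| "lower_pieces m (Suc d) (Node v A l B r) = lower_pieces m d l @ lower_pieces m d r"

definition pieces :: "nat \<Rightarrow> nat \<Rightarrow> 'v stree \<Rightarrow> ('v set \<times> 'v set set) list" where
  "pieces m d T = top_piece m d T # lower_pieces m d T"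

definition child_offset :: "nat \<Rightarrow> nat \<Rightarrow> nat" where
  "child_offset m d = (if d = 0 then m else d - 1)"

lemma pieces_Node:
  "pieces m d (Node v A l B r) =
     (if d = 0 then [({leftmost_leaf r}, B \<union> left_path r)] else []) @
     join_pieces A B (top_piece m (child_offset m d) l) (top_piece m (child_offset m d) r) #
     lower_pieces m (child_offset m d) l @ lower_pieces m (child_offset m d) r"
  by (cases d) (simp_all add: pieces_def child_offset_def)

lemma set_pieces: "set (pieces m d T) = insert (top_piece m d T) (set (lower_pieces m d T))"
  by (simp add: pieces_def)

fun cut_cost :: "('v set \<Rightarrow> real) \<Rightarrow> nat \<Rightarrow> nat \<Rightarrow> 'v stree \<Rightarrow> real" where
  "cut_cost c m d (Leaf v) = 0"
| "cut_cost c m 0 (Node v A l B r) =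
     sum c B + sum c (left_path r) + cut_cost c m m l + cut_cost c m m r"
| "cut_cost c m (Suc d) (Node v A l B r) = cut_cost c m d l + cut_cost c m d r"

lemma cut_cost_Node:
  "cut_cost c m d (Node v A l B r) =
     (if d = 0 then sum c B + sum c (left_path r) else 0) +
     cut_cost c m (child_offset m d) l + cut_cost c m (child_offset m d) r"
  by (cases d) (simp_all add: child_offset_def)

fun detour_cost :: "('v set \<Rightarrow> real) \<Rightarrow> 'v stree \<Rightarrow> real" where
  "detour_cost c (Leaf v) = 0"
| "detour_cost c (Node v A l B r) =
     sum c B + sum c (left_path r) + detour_cost c l + detour_cost c r"

lemma sum_cut_cost: "(\<Sum>d<Suc m. cut_cost c m d T) = detour_cost c T"
proof (induction T)
  case (Node v A l B r)
  have "(\<Sum>d<Suc m. cut_cost c m d (Node v A l B r))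
      = cut_cost c m 0 (Node v A l B r) + (\<Sum>d<m. cut_cost c m (Suc d) (Node v A l B r))"
    by (rule sum.lessThan_Suc_shift)
  also have "\<dots> = sum c B + sum c (left_path r)
      + (\<Sum>d<Suc m. cut_cost c m d l) + (\<Sum>d<Suc m. cut_cost c m d r)"
    by (simp add: sum.distrib)
  finally show ?case using Node by simp
qed simp

text \<open>Each edge lies on exactly one of the detours and the left path, as these paths
  partition the tree.\<close>

lemma detour_cost_le:
  fixes c :: "'v set \<Rightarrow> real"
  assumes "\<And>e. 0 \<le> c e"
  shows "detour_cost c T + sum c (left_path T) \<le> stree_cost c T"
proof (induction T)
  case (Node v A l B r)
  have "sum c (A \<union> left_path l) \<le> sum c A + sum c (left_path l)"
    using assms by (rule sum_Un_le_nonneg)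
  with Node show ?case by simp
qed simp

lemma ex_cut_cost_le:
  fixes c :: "'v set \<Rightarrow> real"
  assumes "\<And>e. 0 \<le> c e"
  obtains d where "d < Suc m" "cut_cost c m d T \<le> stree_cost c T / real (Suc m)"
proof -
  have "0 \<le> sum c (left_path T)" using assms by (simp add: sum_nonneg)
  then have "(\<Sum>d<Suc m. cut_cost c m d T) \<le> stree_cost c T"
    using sum_cut_cost[of c m T] detour_cost_le[of c T, OF assms] by simp
  then have "\<exists>d<Suc m. cut_cost c m d T \<le> stree_cost c T / real (Suc m)"
  proof (rule contrapos_pp)
    assume "\<not> (\<exists>d<Suc m. cut_cost c m d T \<le> stree_cost c T / real (Suc m))"
    then have "(\<Sum>d<Suc m. stree_cost c T / real (Suc m)) < (\<Sum>d<Suc m. cut_cost c m d T)"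
      by (intro sum_strict_mono) auto
    then show "\<not> (\<Sum>d<Suc m. cut_cost c m d T) \<le> stree_cost c T" by simp
  qed
  with that show ?thesis by blast
qed

lemma sum_join_pieces_le:
  fixes c :: "'v set \<Rightarrow> real"
  assumes "\<And>e. 0 \<le> c e"
  shows "sum c (snd (join_pieces A B p q)) \<le> sum c A + sum c B + sum c (snd p) + sum c (snd q)"
proof -
  have "sum c (A \<union> B \<union> snd p \<union> snd q) \<le> sum c (A \<union> B \<union> snd p) + sum c (snd q)"
    "sum c (A \<union> B \<union> snd p) \<le> sum c (A \<union> B) + sum c (snd p)"
    "sum c (A \<union> B) \<le> sum c A + sum c B"
    using assms by (rule sum_Un_le_nonneg)+
  then show ?thesis by (simp add: join_pieces_def)
qed

lemma join_pieces_reachable: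
  assumes "(v, a) \<in> (edge_rel A)\<^sup>*" "(v, b) \<in> (edge_rel B)\<^sup>*"
    and "\<forall>x\<in>fst p. (a, x) \<in> (edge_rel (snd p))\<^sup>*" "\<forall>x\<in>fst q. (b, x) \<in> (edge_rel (snd q))\<^sup>*"
  shows "\<forall>x\<in>fst (join_pieces A B p q). (v, x) \<in> (edge_rel (snd (join_pieces A B p q)))\<^sup>*"
proof
  let ?G = "A \<union> B \<union> snd p \<union> snd q"
  have lift: "(u, w) \<in> (edge_rel ?G)\<^sup>*" if "(u, w) \<in> (edge_rel H)\<^sup>*" "H \<subseteq> ?G" for u w H
    using that(2,1) by (rule rtrancl_edge_rel_mono)
  fix x assume "x \<in> fst (join_pieces A B p q)"
  then consider "x \<in> fst p" | "x \<in> fst q" by (auto simp: join_pieces_def)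
  then have "(v, x) \<in> (edge_rel ?G)\<^sup>*"
  proof cases
    case 1
    then have "(a, x) \<in> (edge_rel ?G)\<^sup>*" using assms(3) lift by blast
    with lift[OF assms(1)] show ?thesis by (blast intro: rtrancl_trans)
  next
    case 2
    then have "(b, x) \<in> (edge_rel ?G)\<^sup>*" using assms(4) lift by blast
    with lift[OF assms(2)] show ?thesis by (blast intro: rtrancl_trans)
  qed
  then show "(v, x) \<in> (edge_rel (snd (join_pieces A B p q)))\<^sup>*" by (simp add: join_pieces_def)
qed

lemma top_piece_nonempty: "fst (top_piece m d T) \<noteq> {}"
proof (induction T arbitrary: d)
  case (Node v A l B r)
  then show ?case by (cases d) (simp_all add: join_pieces_def)
qed simp

lemma card_top_piece: "card (fst (top_piece m d T)) \<le> 2 ^ d"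
proof (induction T arbitrary: d)
  case (Node v A l B r)
  show ?case
  proof (cases d)
    case (Suc d')
    have "card (fst (top_piece m d' l) \<union> fst (top_piece m d' r))
        \<le> card (fst (top_piece m d' l)) + card (fst (top_piece m d' r))"
      by (rule card_Un_le)
    with Node.IH[of d'] Suc show ?thesis by (simp add: join_pieces_def)
  qed simp
qed simp

lemma card_lower_pieces: "p \<in> set (lower_pieces m d T) \<Longrightarrow> card (fst p) \<le> 2 ^ Suc m"
proof (induction T arbitrary: d)
  case (Node v A l B r)
  have "card (fst (top_piece m m l) \<union> fst (top_piece m m r))
      \<le> card (fst (top_piece m m l)) + card (fst (top_piece m m r))"
    by (rule card_Un_le)
  then have "card (fst (join_pieces A B (top_piece m m l) (top_piece m m r))) \<le> 2 ^ Suc m"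
    using card_top_piece[of m m l] card_top_piece[of m m r] by (simp add: join_pieces_def)
  with Node show ?case by (cases d) auto
qed simp

lemma top_piece_reachable:
  "wf_stree T \<Longrightarrow> \<forall>x\<in>fst (top_piece m d T). (stree_root T, x) \<in> (edge_rel (snd (top_piece m d T)))\<^sup>*"
proof (induction T arbitrary: d)
  case (Node v A l B r)
  show ?case
  proof (cases d)
    case 0
    have "(v, stree_root r) \<in> (edge_rel (B \<union> left_path r))\<^sup>*"
      using Node.prems by (simp add: rtrancl_edge_rel_UnI1)
    moreover have "(stree_root r, leftmost_leaf r) \<in> (edge_rel (B \<union> left_path r))\<^sup>*"
      using Node.prems rtrancl_left_path[of r] by (simp add: rtrancl_edge_rel_UnI2)
    ultimately show ?thesis using 0 by (simp add: rtrancl_trans)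
  next
    case (Suc d')
    have "\<forall>x\<in>fst (join_pieces A B (top_piece m d' l) (top_piece m d' r)).
        (v, x) \<in> (edge_rel (snd (join_pieces A B (top_piece m d' l) (top_piece m d' r))))\<^sup>*"
      using Node.prems Node.IH[of d'] by (intro join_pieces_reachable) simp_all
    then show ?thesis using Suc by simp
  qed
qed simp

lemma lower_pieces_connects:
  "wf_stree T \<Longrightarrow> p \<in> set (lower_pieces m d T) \<Longrightarrow> connects (snd p) (fst p)"
proof (induction T arbitrary: d)
  case (Node v A l B r)
  have "connects (snd (join_pieces A B (top_piece m m l) (top_piece m m r)))
                 (fst (join_pieces A B (top_piece m m l) (top_piece m m r)))"
    using Node.prems(1) top_piece_reachable[of l m m] top_piece_reachable[of r m m]
    by (intro connects_if_reachable[where a = v] join_pieces_reachable) simp_all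
  with Node show ?case by (cases d) auto
qed simp

lemma pieces_edges: "p \<in> set (pieces m d T) \<Longrightarrow> snd p \<subseteq> stree_edges T"
proof (induction T arbitrary: d p)
  case (Node v A l B r)
  let ?d = "child_offset m d"
  have "snd (top_piece m ?d l) \<subseteq> stree_edges l" "snd (top_piece m ?d r) \<subseteq> stree_edges r"
    and "\<forall>q\<in>set (lower_pieces m ?d l). snd q \<subseteq> stree_edges l"
    and "\<forall>q\<in>set (lower_pieces m ?d r). snd q \<subseteq> stree_edges r"
    using Node.IH[of _ ?d] by (simp_all add: set_pieces)
  with Node.prems left_path_subset_edges[of r] show ?case
    by (auto simp: pieces_Node join_pieces_def split: if_splits)
qed (simp add: pieces_def)

lemma Union_pieces: "\<Union>(fst ` set (pieces m d T)) = stree_leaves T"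
proof (induction T arbitrary: d)
  case (Node v A l B r)
  let ?d = "child_offset m d"
  have "\<Union>(fst ` set (pieces m d (Node v A l B r))) =
      (if d = 0 then {leftmost_leaf r} else {}) \<union>
      \<Union>(fst ` set (pieces m ?d l)) \<union> \<Union>(fst ` set (pieces m ?d r))"
    by (auto simp: pieces_Node set_pieces join_pieces_def)
  with Node.IH leftmost_leaf_in_leaves[of r] show ?case by auto
qed (simp add: pieces_def)

lemma pieces_chain:
  "stree_leaves T \<times> stree_leaves T \<subseteq> (comember_rel (fst ` set (pieces m d T)))\<^sup>*"
proof (induction T arbitrary: d)
  case (Leaf v)
  then show ?case by (auto simp: pieces_def comember_rel_def)
next
  case (Node v A l B r)
  let ?d = "child_offset m d"
  let ?J = "join_pieces A B (top_piece m ?d l) (top_piece m ?d r)"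
  let ?R = "comember_rel (fst ` set (pieces m d (Node v A l B r)))"
  have J: "?J \<in> set (pieces m d (Node v A l B r))" by (simp add: pieces_Node)
  have sub: "comember_rel (fst ` set (pieces m ?d t)) \<subseteq> ?R" if "t \<in> {l, r}" for t
  proof (rule comember_rel_mono, rule ballI)
    fix P assume "P \<in> fst ` set (pieces m ?d t)"
    then have "P \<subseteq> fst ?J \<or> P \<in> fst ` set (lower_pieces m ?d t)"
      using that by (auto simp: set_pieces join_pieces_def)
    then show "\<exists>Q\<in>fst ` set (pieces m d (Node v A l B r)). P \<subseteq> Q"
      using J that by (auto simp: pieces_Node)
  qed
  have l: "stree_leaves l \<times> stree_leaves l \<subseteq> ?R\<^sup>*" and r: "stree_leaves r \<times> stree_leaves r \<subseteq> ?R\<^sup>*"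
    using Node.IH[of ?d] rtrancl_mono[OF sub] by blast+
  obtain x y where xy: "x \<in> fst (top_piece m ?d l)" "y \<in> fst (top_piece m ?d r)"
    using top_piece_nonempty[of m ?d l] top_piece_nonempty[of m ?d r] by blast
  have "fst ?J \<in> fst ` set (pieces m d (Node v A l B r))" using J by (rule imageI)
  moreover have "x \<in> fst ?J" "y \<in> fst ?J" using xy by (auto simp: join_pieces_def)
  ultimately have "(x, y) \<in> ?R" unfolding comember_rel_def by blast
  moreover have "x \<in> stree_leaves l" "y \<in> stree_leaves r"
    using xy Union_pieces[of m ?d l] Union_pieces[of m ?d r] by (auto simp: set_pieces)
  ultimately show ?case
    using Times_subset_rtrancl_Un[OF sym_comember_rel l r] by (simp add: r_into_rtrancl)
qed

lemma pieces_cost: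
  fixes c :: "'v set \<Rightarrow> real"
  assumes "\<And>e. 0 \<le> c e"
  shows "(\<Sum>p\<leftarrow>pieces m d T. sum c (snd p)) \<le> stree_cost c T + cut_cost c m d T"
proof (induction T arbitrary: d)
  case (Node v A l B r)
  define d' where "d' = child_offset m d"
  have "sum c (snd (join_pieces A B (top_piece m d' l) (top_piece m d' r)))
      \<le> sum c A + sum c B + sum c (snd (top_piece m d' l)) + sum c (snd (top_piece m d' r))"
    using assms by (rule sum_join_pieces_le)
  moreover have "sum c (B \<union> left_path r) \<le> sum c B + sum c (left_path r)"
    using assms by (rule sum_Un_le_nonneg)
  moreover note Node.IH[of d', unfolded pieces_def]
  ultimately show ?case by (simp add: pieces_Node cut_cost_Node flip: d'_def)
qed (simp add: pieces_def)

lemma stree_pieces: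
  fixes c :: "'v set \<Rightarrow> real"
  assumes "wf_stree T" "\<And>e. 0 \<le> c e"
  obtains L where
    "\<forall>p\<in>set L. fst p \<subseteq> stree_leaves T \<and> card (fst p) \<le> 2 ^ Suc m \<and>
               snd p \<subseteq> stree_edges T \<and> connects (snd p) (fst p)"
    "stree_leaves T \<times> stree_leaves T \<subseteq> (comember_rel (fst ` set L))\<^sup>*"
    "(\<Sum>p\<leftarrow>L. sum c (snd p)) \<le> (1 + 1 / real (Suc m)) * stree_cost c T"
proof -
  obtain d where d: "d < Suc m" "cut_cost c m d T \<le> stree_cost c T / real (Suc m)"
    using ex_cut_cost_le[of c m T] assms(2) by blast
  have "card (fst (top_piece m d T)) \<le> 2 ^ Suc m"
    using card_top_piece[of m d T] power_increasing[of d "Suc m" "2::nat"] d(1) by simp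
  moreover have "connects (snd (top_piece m d T)) (fst (top_piece m d T))"
    using top_piece_reachable[OF assms(1)] by (rule connects_if_reachable)
  ultimately have "\<forall>p\<in>set (pieces m d T). fst p \<subseteq> stree_leaves T \<and> card (fst p) \<le> 2 ^ Suc m \<and>
               snd p \<subseteq> stree_edges T \<and> connects (snd p) (fst p)"
    using Union_pieces[of m d T] pieces_edges[of _ m d T] card_lower_pieces[of _ m d T]
      lower_pieces_connects[OF assms(1)] by (auto simp: set_pieces)
  moreover have "(\<Sum>p\<leftarrow>pieces m d T. sum c (snd p)) \<le> (1 + 1 / real (Suc m)) * stree_cost c T"
    using pieces_cost[of c m d T, OF assms(2)] d(2) by (simp add: algebra_simps)
  ultimately show ?thesis using that pieces_chain[of T m d] by blast
qed

section \<open>Splitting a connected set into small sets\<close>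

lemma connects_split:
  fixes c :: "'v set \<Rightarrow> real"
  assumes "finite E" "\<forall>e\<in>E. 0 \<le> c e" "connects E S"
  obtains Sk where "\<forall>P\<in>Sk. P \<subseteq> S \<and> card P \<le> 2 ^ Suc m"
    and "cost_coll E c Sk \<le> (1 + 1 / real (Suc m)) * cost_set E c S"
    and "S \<times> S \<subseteq> (comember_rel Sk)\<^sup>*"
proof (cases "S = {}")
  case True
  have "0 \<le> cost_set E c S" using assms by (rule cost_set_nonneg)
  then show ?thesis using that[of "{}"] True by (simp add: cost_coll_def)
next
  case False
  txt \<open>Zeroing the costs outside \<open>E\<close> makes them nonnegative everywhere and changes no
    cost of a subset of \<open>E\<close>.\<close>
  define c' where "c' e = (if e \<in> E then c e else 0)" for e
  have c'_nonneg: "\<And>e. 0 \<le> c' e" using assms(2) by (simp add: c'_def)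
  have c'_eq: "sum c' F = sum c F" if "F \<subseteq> E" for F
    using that by (intro sum.cong) (auto simp: c'_def)
  obtain F where F: "F \<subseteq> E" "connects F S" "sum c F = cost_set E c S"
    using cost_set_attained[OF assms(1,3)] by blast
  obtain T where T: "wf_stree T" "stree_leaves T = S" "stree_edges T \<subseteq> F"
      "stree_cost c' T \<le> sum c' F"
    using stree_exists[of F c' S] finite_subset[OF F(1) assms(1)] c'_nonneg False F(2) by blast
  obtain L where L: "\<forall>p\<in>set L. fst p \<subseteq> S \<and> card (fst p) \<le> 2 ^ Suc m \<and>
        snd p \<subseteq> stree_edges T \<and> connects (snd p) (fst p)"
      "S \<times> S \<subseteq> (comember_rel (fst ` set L))\<^sup>*"
      "(\<Sum>p\<leftarrow>L. sum c' (snd p)) \<le> (1 + 1 / real (Suc m)) * stree_cost c' T"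
    using stree_pieces[of T c' m] T(1,2) c'_nonneg by metis
  have L_edges: "\<forall>p\<in>set L. snd p \<subseteq> E \<and> connects (snd p) (fst p)"
    using L(1) T(3) F(1) by blast
  then have "(\<Sum>p\<leftarrow>L. sum c (snd p)) = (\<Sum>p\<leftarrow>L. sum c' (snd p))"
    using c'_eq by (metis (no_types, lifting) map_eq_conv)
  with cost_coll_le_sum_list[OF assms(1,2) L_edges]
  have "cost_coll E c (fst ` set L) \<le> (\<Sum>p\<leftarrow>L. sum c' (snd p))" by simp
  also have "\<dots> \<le> (1 + 1 / real (Suc m)) * stree_cost c' T" by (rule L(3))
  also have "\<dots> \<le> (1 + 1 / real (Suc m)) * cost_set E c S"
    using T(4) c'_eq[OF F(1)] F(3) by (intro mult_left_mono) auto
  finally show ?thesis using that[of "fst ` set L"] L(1,2) by auto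
qed

section \<open>Components, active connectivity and the gain\<close>

definition connected_rel :: "'v set \<Rightarrow> 'v set set \<Rightarrow> ('v \<times> 'v) set" where
  "connected_rel V F = {(u, v). u \<in> V \<and> v \<in> V \<and> (u, v) \<in> (edge_rel F)\<^sup>*}"

lemma comps_eq_quotient: "comps V F = V // connected_rel V F"
  by (simp add: comps_def connected_rel_def)

lemma equiv_connected_rel: "equiv V (connected_rel V F)"
proof (rule equivI)
  show "refl_on V (connected_rel V F)" by (auto simp: refl_on_def connected_rel_def)
  show "sym (connected_rel V F)"
    by (rule symI) (auto simp: connected_rel_def dest: rtrancl_edge_rel_sym)
  show "trans (connected_rel V F)"
    by (rule transI) (auto simp: connected_rel_def dest: rtrancl_trans)
qed (auto simp: connected_rel_def)

lemma comps_subset: "C \<in> comps V F \<Longrightarrow> C \<subseteq> V"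
  using in_quotient_imp_subset[OF equiv_connected_rel] by (simp add: comps_eq_quotient)

lemma comps_connected:
  assumes "C \<in> comps V F" "u \<in> C" "v \<in> C"
  shows "(u, v) \<in> (edge_rel F)\<^sup>*"
  using quotient_eq_iff[OF equiv_connected_rel, of C V F C u v] assms
  by (simp add: comps_eq_quotient connected_rel_def)

lemma comps_disjoint:
  assumes "C \<in> comps V F" "C' \<in> comps V F" "u \<in> C" "u \<in> C'"
  shows "C = C'"
  using quotient_eq_iff[OF equiv_connected_rel, of C V F C' u u] assms comps_subset[OF assms(1)]
  by (auto simp: comps_eq_quotient connected_rel_def)

lemma comps_closed:
  assumes "C \<in> comps V F" "u \<in> C" "v \<in> V" "(u, v) \<in> (edge_rel F)\<^sup>*"
  shows "v \<in> C"
proof -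
  let ?C' = "connected_rel V F `` {v}"
  have C': "?C' \<in> comps V F" "v \<in> ?C'"
    using assms(3) equiv_class_self[OF equiv_connected_rel]
    by (auto simp: comps_eq_quotient intro: quotientI)
  have "(u, v) \<in> connected_rel V F"
    using assms comps_subset[OF assms(1)] by (auto simp: connected_rel_def)
  then have "C = ?C'"
    using quotient_eq_iff[OF equiv_connected_rel, of C V F ?C' u v] assms(1,2) C'
    by (simp add: comps_eq_quotient)
  with C' show ?thesis by simp
qed

lemma act_conn_setE:
  assumes "act_conn_set V Fs Act S" "u \<in> S" "v \<in> S"
  obtains t C where "0 \<le> t" "C \<in> comps V (Fs t)" "u \<in> C" "v \<in> C"
    "ereal t \<le> deact_time Act u" "ereal t \<le> deact_time Act v"
proof -
  have "act_conn V Fs Act u v" using assms unfolding act_conn_set_def by blast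
  then obtain t where t: "0 \<le> t" "\<exists>C\<in>comps V (Fs t). u \<in> C \<and> v \<in> C"
      "ereal t \<le> deact_time Act u" "ereal t \<le> deact_time Act v"
    unfolding act_conn_def by blast
  then obtain C where "C \<in> comps V (Fs t)" "u \<in> C" "v \<in> C" by blast
  with t show ?thesis using that by blast
qed

lemma active_before_deact_time:
  assumes "0 \<le> t" "ereal t < deact_time Act v"
  shows "\<exists>X\<in>Act t. v \<in> X"
proof -
  obtain s where "s \<in> {s. 0 \<le> s \<and> (\<forall>s'. 0 \<le> s' \<and> s' < s \<longrightarrow> (\<exists>X\<in>Act s'. v \<in> X))}"
      "ereal t < ereal s"
    using assms(2) unfolding deact_time_def less_SUP_iff by blast
  then show ?thesis using assms(1) by auto
qed

context
  fixes V E c D eps Fs Act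
  assumes run: "moat_run V E c D eps Fs Act"
begin

lemma Fs_eq: "0 \<le> t \<Longrightarrow> Fs t = {e \<in> E. load V E Act e t \<ge> c e}"
  using run by (simp add: moat_run_def)

lemma Act_subset_comps: "0 \<le> t \<Longrightarrow> Act t \<subseteq> comps V (Fs t)"
  using run by (auto simp: moat_run_def)

lemma Fs_mono:
  assumes "0 \<le> s" "s \<le> t"
  shows "Fs s \<subseteq> Fs t"
proof -
  have "dual Act S s \<le> dual Act S t" for S
    unfolding dual_def using run assms by (intro integral_subset_le) (auto simp: moat_run_def)
  then have "load V E Act e s \<le> load V E Act e t" for e
    unfolding load_def by (intro sum_mono)
  with assms show ?thesis by (auto simp: Fs_eq intro: order_trans)
qed

lemma Fs_connected_mono:
  "0 \<le> s \<Longrightarrow> s \<le> t \<Longrightarrow> (u, v) \<in> (edge_rel (Fs s))\<^sup>* \<Longrightarrow> (u, v) \<in> (edge_rel (Fs t))\<^sup>*"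
  using Fs_mono by (rule rtrancl_edge_rel_mono)

lemma act_conn_set_connects:
  assumes "act_conn_set V Fs Act S"
  shows "connects E S"
  unfolding connects_def
proof (intro ballI)
  fix u v assume "u \<in> S" "v \<in> S"
  with assms obtain t C where "0 \<le> t" "C \<in> comps V (Fs t)" "u \<in> C" "v \<in> C"
    by (rule act_conn_setE)
  then have "(u, v) \<in> (edge_rel (Fs t))\<^sup>*" by (simp add: comps_connected)
  moreover have "Fs t \<subseteq> E" using Fs_eq[OF \<open>0 \<le> t\<close>] by blast
  ultimately show "(u, v) \<in> (edge_rel E)\<^sup>*" by (rule rtrancl_edge_rel_mono[rotated])
qed

lemma act_conn_set_subset_active:
  assumes "act_conn_set V Fs Act S" "0 \<le> t" "z \<in> S" "ereal t < deact_time Act z"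
  shows "S \<subseteq> \<Union>(Act t)"
proof
  fix w assume w: "w \<in> S"
  note active = active_before_deact_time[OF assms(2)]
  obtain Z where Z: "Z \<in> Act t" "z \<in> Z" using active[OF assms(4)] by blast
  obtain s C where s: "0 \<le> s" "C \<in> comps V (Fs s)" "z \<in> C" "w \<in> C"
      "ereal s \<le> deact_time Act z" "ereal s \<le> deact_time Act w"
    using assms(1,3) w by (rule act_conn_setE)
  show "w \<in> \<Union>(Act t)"
  proof (cases "s \<le> t")
    case True
    have zw: "(z, w) \<in> (edge_rel (Fs t))\<^sup>*"
      using comps_connected[OF s(2-4)] by (rule Fs_connected_mono[OF s(1) True])
    have Z_comp: "Z \<in> comps V (Fs t)" using Z(1) Act_subset_comps[OF assms(2)] by blast
    have "w \<in> V" using comps_subset[OF s(2)] s(4) by blast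
    with Z_comp Z(2) have "w \<in> Z" using zw by (rule comps_closed)
    with Z show ?thesis by blast
  next
    case False
    then have "ereal t < ereal s" by simp
    then have "ereal t < deact_time Act w" using s(6) by (rule order_less_le_trans)
    then show ?thesis using active by (meson UnionI)
  qed
qed

lemma act_conn_set_meets_one_active:
  assumes "act_conn_set V Fs Act S" "0 \<le> t" "\<forall>z\<in>S. deact_time Act z \<le> ereal t"
    and XY: "X \<in> Act t" "Y \<in> Act t" "u \<in> X \<inter> S" "v \<in> Y \<inter> S"
  shows "X = Y"
proof -
  have "u \<in> S" "v \<in> S" using XY(3,4) by blast+
  with assms(1) obtain s C where s: "0 \<le> s" "C \<in> comps V (Fs s)" "u \<in> C" "v \<in> C"
      "ereal s \<le> deact_time Act u" "ereal s \<le> deact_time Act v"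
    by (rule act_conn_setE)
  have "deact_time Act u \<le> ereal t" using assms(3) \<open>u \<in> S\<close> by blast
  with s(5) have "ereal s \<le> ereal t" by (rule order_trans)
  then have "s \<le> t" by simp
  then have uv: "(u, v) \<in> (edge_rel (Fs t))\<^sup>*"
    using comps_connected[OF s(2-4)] by (rule Fs_connected_mono[OF s(1)])
  have X: "X \<in> comps V (Fs t)" "Y \<in> comps V (Fs t)"
    using XY(1,2) Act_subset_comps[OF assms(2)] by blast+
  have "u \<in> X" "v \<in> V" using XY(3) comps_subset[OF s(2)] s(4) by blast+
  with X(1) have "v \<in> X" using uv by (rule comps_closed)
  moreover have "v \<in> Y" using XY(4) by blast
  ultimately show ?thesis by (rule comps_disjoint[OF X])
qed

text \<open>Either some vertex of \<open>S\<close> is still active, and then every other vertex is active or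
  already joined to it, or all of \<open>S\<close> was joined into one component before being deactivated.\<close>

lemma act_conn_set_at_time:
  assumes "act_conn_set V Fs Act S" "0 \<le> t"
  shows "S \<subseteq> \<Union>(Act t) \<or> (\<forall>X\<in>Act t. \<forall>Y\<in>Act t. X \<inter> S \<noteq> {} \<longrightarrow> Y \<inter> S \<noteq> {} \<longrightarrow> X = Y)"
proof (cases "\<exists>z\<in>S. ereal t < deact_time Act z")
  case True
  then show ?thesis using act_conn_set_subset_active[OF assms] by blast
next
  case False
  then have "\<forall>z\<in>S. deact_time Act z \<le> ereal t" by (simp add: not_less)
  then show ?thesis using act_conn_set_meets_one_active[OF assms] by blast
qed

end

lemma merge_rel_singleton_subset_rtrancl:
  assumes disj: "\<forall>X\<in>A. \<forall>Y\<in>A. X \<inter> Y \<noteq> {} \<longrightarrow> X = Y"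
    and cover: "S \<subseteq> \<Union>A" and sub: "\<forall>P\<in>Sk. P \<subseteq> S" and chain: "S \<times> S \<subseteq> (comember_rel Sk)\<^sup>*"
  shows "merge_rel A {S} \<subseteq> (merge_rel A Sk)\<^sup>*"
proof
  fix p assume "p \<in> merge_rel A {S}"
  then obtain X Y u v where p: "p = (X, Y)" "X \<in> A" "Y \<in> A" "u \<in> S \<inter> X" "v \<in> S \<inter> Y"
    unfolding merge_rel_def by blast
  have "(X, W) \<in> (merge_rel A Sk)\<^sup>*" if "(u, w) \<in> (comember_rel Sk)\<^sup>*" "W \<in> A" "w \<in> W" for w W
    using that(1,2,3)
  proof (induction arbitrary: W rule: rtrancl_induct)
    case base
    then show ?case using disj p(2,4) by blast
  next
    case (step y w)
    then obtain P where P: "P \<in> Sk" "y \<in> P" "w \<in> P" by (auto simp: comember_rel_def)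
    then obtain Y' where "Y' \<in> A" "y \<in> Y'" using sub cover by blast
    moreover from this have "(Y', W) \<in> merge_rel A Sk"
      using P step.prems unfolding merge_rel_def by blast
    ultimately show ?case using step.IH by (meson rtrancl_into_rtrancl)
  qed
  with p chain show "p \<in> (merge_rel A Sk)\<^sup>*" by blast
qed

lemma quot_fam_eq_singleton:
  assumes disj: "\<forall>X\<in>A. \<forall>Y\<in>A. X \<inter> Y \<noteq> {} \<longrightarrow> X = Y"
    and sub: "\<forall>P\<in>Sk. P \<subseteq> S" and chain: "S \<times> S \<subseteq> (comember_rel Sk)\<^sup>*"
    and meets: "S \<subseteq> \<Union>A \<or> (\<forall>X\<in>A. \<forall>Y\<in>A. X \<inter> S \<noteq> {} \<longrightarrow> Y \<inter> S \<noteq> {} \<longrightarrow> X = Y)"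
  shows "quot_fam A Sk = quot_fam A {S}"
proof -
  have "merge_rel A Sk \<subseteq> merge_rel A {S}" using sub unfolding merge_rel_def by blast
  then have "(merge_rel A Sk)\<^sup>* \<subseteq> (merge_rel A {S})\<^sup>*" by (rule rtrancl_mono)
  moreover have "merge_rel A {S} \<subseteq> (merge_rel A Sk)\<^sup>*"
    using meets
  proof
    assume "S \<subseteq> \<Union>A"
    with disj show ?thesis using sub chain by (rule merge_rel_singleton_subset_rtrancl)
  next
    assume "\<forall>X\<in>A. \<forall>Y\<in>A. X \<inter> S \<noteq> {} \<longrightarrow> Y \<inter> S \<noteq> {} \<longrightarrow> X = Y"
    then have "merge_rel A {S} \<subseteq> Id" unfolding merge_rel_def by blast
    also have "Id \<subseteq> (merge_rel A Sk)\<^sup>*" by (rule subrelI) simp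
    finally show ?thesis .
  qed
  then have "(merge_rel A {S})\<^sup>* \<subseteq> (merge_rel A Sk)\<^sup>*" by (rule rtrancl_subset_rtrancl)
  ultimately have "(merge_rel A Sk)\<^sup>* = (merge_rel A {S})\<^sup>*" by (rule subset_antisym)
  then show ?thesis unfolding quot_fam_def by (simp only:)
qed

lemma gain_eq_singleton:
  assumes run: "moat_run V E c D eps Fs Act" and S: "act_conn_set V Fs Act S"
    and sub: "\<forall>P\<in>Sk. P \<subseteq> S" and chain: "S \<times> S \<subseteq> (comember_rel Sk)\<^sup>*"
  shows "gain Act Sk = gain Act {S}"
proof -
  have "quot_fam (Act t) Sk = quot_fam (Act t) {S}" if t: "0 \<le> t" for t
  proof (rule quot_fam_eq_singleton[OF _ sub chain])
    show "\<forall>X\<in>Act t. \<forall>Y\<in>Act t. X \<inter> Y \<noteq> {} \<longrightarrow> X = Y"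
    proof (intro ballI impI)
      fix X Y assume XY: "X \<in> Act t" "Y \<in> Act t" "X \<inter> Y \<noteq> {}"
      then have "X \<in> comps V (Fs t)" "Y \<in> comps V (Fs t)"
        using Act_subset_comps[OF run t] by blast+
      moreover obtain u where "u \<in> X" "u \<in> Y" using XY(3) by blast
      ultimately show "X = Y" by (rule comps_disjoint)
    qed
    show "S \<subseteq> \<Union>(Act t) \<or> (\<forall>X\<in>Act t. \<forall>Y\<in>Act t. X \<inter> S \<noteq> {} \<longrightarrow> Y \<inter> S \<noteq> {} \<longrightarrow> X = Y)"
      using run S t by (rule act_conn_set_at_time)
  qed
  then have "integral {0..} (\<lambda>t. real (card (Act t)) - real (card (quot_fam (Act t) Sk)))
      = integral {0..} (\<lambda>t. real (card (Act t)) - real (card (quot_fam (Act t) {S})))"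
    by (intro Henstock_Kurzweil_Integration.integral_cong) simp
  then show ?thesis by (simp add: gain_def)
qed

lemma floor_log2_Suc:
  assumes "2 \<le> k"
  obtains m where "\<lfloor>log 2 (real k)\<rfloor> = int (Suc m)" "2 ^ Suc m \<le> k"
proof -
  obtain n where n: "2 ^ n \<le> k" "k < 2 ^ (n + 1)" using ex_power_ivl1[of 2 k] assms by auto
  then have "\<lfloor>log 2 (real k)\<rfloor> = int n" using floor_log_nat_eq_if[of 2 n k] by simp
  moreover have "n \<noteq> 0" using n(2) assms by (intro notI) simp
  ultimately show ?thesis using that n(1) by (metis not0_implies_Suc)
qed

theorem lemma3p8:
  fixes V :: "'v set" and E :: "'v set set" and c :: "'v set \<Rightarrow> real"
    and D :: "'v set set" and eps :: real
    and Fs Act :: "real \<Rightarrow> 'v set set" and k :: nat and S :: "'v set"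
  assumes "finite V"
    and "\<forall>e\<in>E. \<exists>u v. e = {u, v} \<and> u \<noteq> v \<and> u \<in> V \<and> v \<in> V"
    and "\<forall>e\<in>E. c e \<ge> 0"
    and "\<forall>d\<in>D. \<exists>a b. d = {a, b} \<and> a \<in> V \<and> b \<in> V"
    and "\<forall>d\<in>D. \<forall>a\<in>d. \<forall>b\<in>d. (a, b) \<in> (edge_rel E)\<^sup>*"
    and "eps \<ge> 0"
    and "moat_run V E c D eps Fs Act"
    and "k \<ge> 2"
    and "act_conn_set V Fs Act S"
  shows "\<exists>Sk. (\<forall>T\<in>Sk. T \<subseteq> S \<and> card T \<le> k) \<and>
              cost_coll E c Sk \<le> (1 + 1 / real_of_int \<lfloor>log 2 (real k)\<rfloor>) * cost_set E c S \<and>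
              gain Act Sk = gain Act {S}"
proof -
  have "E \<subseteq> Pow V"
  proof
    fix e assume "e \<in> E"
    with assms(2) obtain u v where "e = {u, v}" "u \<in> V" "v \<in> V" by blast
    then show "e \<in> Pow V" by simp
  qed
  then have "finite E" using assms(1) by (simp add: finite_subset)
  obtain m where m: "\<lfloor>log 2 (real k)\<rfloor> = int (Suc m)" "2 ^ Suc m \<le> k"
    using assms(8) by (rule floor_log2_Suc)
  have "connects E S" using assms(7,9) by (rule act_conn_set_connects)
  with \<open>finite E\<close> assms(3) obtain Sk where Sk: "\<forall>P\<in>Sk. P \<subseteq> S \<and> card P \<le> 2 ^ Suc m"
      "cost_coll E c Sk \<le> (1 + 1 / real (Suc m)) * cost_set E c S" "S \<times> S \<subseteq> (comember_rel Sk)\<^sup>*"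
    by (rule connects_split)
  have small: "\<forall>T\<in>Sk. T \<subseteq> S \<and> card T \<le> k"
  proof
    fix T assume "T \<in> Sk"
    with Sk(1) have "T \<subseteq> S" "card T \<le> 2 ^ Suc m" by auto
    with m(2) show "T \<subseteq> S \<and> card T \<le> k" by simp
  qed
  moreover have "cost_coll E c Sk \<le> (1 + 1 / real_of_int \<lfloor>log 2 (real k)\<rfloor>) * cost_set E c S"
    using Sk(2) m(1) by simp
  moreover have "gain Act Sk = gain Act {S}"
    using assms(7,9) _ Sk(3) by (rule gain_eq_singleton) (use small in blast)
  ultimately show ?thesis by blast
qed

end
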